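(* Let $I\subset\mathbb{R}$ be an interval, $\psi:I\to\mathbb{R}$ a non-decreasing convex function, $n\ge2$, $a=(a_1,\dots,a_n)\in I^n$ a relative convex sequence, and $t=(t_1,\dots,t_n)\in T_a$. Let $p=(p_1,\dots,p_n)\in[0,\infty)^n$ with $P_n=\sum p_i>0$ and assume $M_{n,p}(t)<t_n$ (i.e. $p_i>0$ for some $i<n$). Put $$m=\lfloor M_{n,p}(t)\rfloor_t,\quad \gamma_t=\frac{M_{n,p}(t)-t_m}{t_{m+1}-t_m},\quad \lambda_t=\frac{t_n-M_{n,p}(t)}{t_n-t_1}.$$ Then $$\gamma_t\,\psi(a_{m+1})+(1-\gamma_t)\,\psi(a_m)\le\frac1{P_n}\sum_{i=1}^n p_i\psi(a_i)\le \lambda_t\,\psi(a_1)+(1-\lambda_t)\,\psi(a_n).$$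
   Context: For a real sequence $(x_i)$, $\Delta x_i=x_{i+1}-x_i$. "Increasing" means strictly increasing. For a real sequence $a=(a_i)_{i=1}^n$, $T_a$ denotes the set of increasing real sequences $(t_i)_{i=1}^n$ such that $(\Delta a_i/\Delta t_i)_{i=1}^{n-1}$ is non-decreasing; $a$ is relative convex if $T_a\ne\emptyset$. $M_{n,p}(t)=\frac1{P_n}\sum_{i=1}^n p_it_i$. For an increasing sequence $t=(t_1,\dots,t_n)$ and $q\in[t_1,t_n]$, $\lfloor q\rfloor_t$ denotes the index $i$ of the largest $t_i$ with $t_i\le q$. *)

theory Defs
  imports "HOL-Analysis.Analysis"
begin

text \<open>Sequences of length n are functions nat \<Rightarrow> real, used on indices 1..n.\<close>

definition incr_seq :: "nat \<Rightarrow> (nat \<Rightarrow> real) \<Rightarrow> bool" where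
  "incr_seq n t \<longleftrightarrow> (\<forall>i\<in>{1..<n}. t i < t (Suc i))"

definition T_set :: "nat \<Rightarrow> (nat \<Rightarrow> real) \<Rightarrow> (nat \<Rightarrow> real) set" where
  "T_set n a = {t. incr_seq n t \<and>
     (\<forall>i\<in>{1..<n}. \<forall>j\<in>{1..<n}. i \<le> j \<longrightarrow>
        (a (Suc i) - a i) / (t (Suc i) - t i) \<le> (a (Suc j) - a j) / (t (Suc j) - t j))}"

definition relative_convex :: "nat \<Rightarrow> (nat \<Rightarrow> real) \<Rightarrow> bool" where
  "relative_convex n a \<longleftrightarrow> T_set n a \<noteq> {}"

definition P_sum :: "nat \<Rightarrow> (nat \<Rightarrow> real) \<Rightarrow> real" where
  "P_sum n p = (\<Sum>i=1..n. p i)"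

definition M_mean :: "nat \<Rightarrow> (nat \<Rightarrow> real) \<Rightarrow> (nat \<Rightarrow> real) \<Rightarrow> real" where
  "M_mean n p t = (1 / P_sum n p) * (\<Sum>i=1..n. p i * t i)"

definition floor_idx :: "nat \<Rightarrow> (nat \<Rightarrow> real) \<Rightarrow> real \<Rightarrow> nat" where
  "floor_idx n t q = (GREATEST i. i \<in> {1..n} \<and> t i \<le> q)"

end

theory Submission
  imports Defs
begin

text \<open>For three consecutive indices, the slope condition of \<open>T\<^sub>a\<close> says that \<open>a\<^sub>k\<^sub>+\<^sub>1\<close> lies below
  the \<open>t\<close>-weighted convex combination of \<open>a\<^sub>k\<close> and \<open>a\<^sub>k\<^sub>+\<^sub>2\<close>; applying the non-decreasing \<open>\<psi>\<close> and
  then its convexity carries this over to \<open>\<psi> \<circ> a\<close>, so \<open>t \<in> T\<^bsub>\<psi> \<circ> a\<^esub>\<close>. A sequence with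
  non-decreasing slopes relative to \<open>t\<close> lies above the line through its \<open>m\<close>-th and \<open>(m+1)\<close>-st
  points and below the chord through its first and last points. Averaging these affine bounds
  with the weights \<open>p\<close> evaluates them at \<open>M\<^sub>n\<^sub>,\<^sub>p(t)\<close>, which gives the two inequalities.\<close>

definition rel_slope :: "(nat \<Rightarrow> real) \<Rightarrow> (nat \<Rightarrow> real) \<Rightarrow> nat \<Rightarrow> real" where
  "rel_slope t s k = (s (Suc k) - s k) / (t (Suc k) - t k)"

lemma T_set_iff:
  "t \<in> T_set n s \<longleftrightarrow> incr_seq n t \<and>
     (\<forall>k l. 1 \<le> k \<longrightarrow> k \<le> l \<longrightarrow> l < n \<longrightarrow> rel_slope t s k \<le> rel_slope t s l)"
  by (auto simp: T_set_def rel_slope_def)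

lemma incr_seq_less:
  assumes "incr_seq n t" "1 \<le> j" "j < i" "i \<le> n"
  shows "t j < t i"
proof -
  have "Suc j \<le> i" using assms(3) by simp
  then show ?thesis using assms(4)
  proof (induction i rule: dec_induct)
    case base
    then show ?case using assms(1,2) by (simp add: incr_seq_def)
  next
    case (step i)
    then have "t i < t (Suc i)" using assms(2) by (simp add: assms(1)[unfolded incr_seq_def])
    then show ?case using step by simp
  qed
qed

lemma incr_seq_le:
  assumes "incr_seq n t" "1 \<le> j" "j \<le> i" "i \<le> n"
  shows "t j \<le> t i"
  using incr_seq_less[OF assms(1,2) _ assms(4)] assms(3) by (cases "j = i") auto

lemma convex_mono_relative_slope_le:
  fixes \<psi> :: "real \<Rightarrow> real"
  assumes "convex_on I \<psi>" "mono_on I \<psi>" "x \<in> I" "y \<in> I" "z \<in> I"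
    and "h1 > 0" "h2 > 0" "(y - x) / h1 \<le> (z - y) / h2"
  shows "(\<psi> y - \<psi> x) / h1 \<le> (\<psi> z - \<psi> y) / h2"
proof -
  define \<mu> where "\<mu> = h1 / (h1 + h2)"
  have \<mu>: "0 \<le> \<mu>" "\<mu> \<le> 1" using assms(6,7) by (auto simp: \<mu>_def)
  have combination: "(1 - \<mu>) * u + \<mu> * v = (h2 * u + h1 * v) / (h1 + h2)" for u v
  proof -
    have "1 - \<mu> = h2 / (h1 + h2)" using assms(6,7) by (simp add: \<mu>_def field_simps)
    then show ?thesis by (simp add: \<mu>_def add_divide_distrib)
  qed
  define w where "w = (1 - \<mu>) * x + \<mu> * z"
  have "w \<in> I"
    using convexD[OF convex_on_imp_convex[OF assms(1)] assms(3,5), of "1 - \<mu>" \<mu>] \<mu>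
    by (simp add: w_def)
  have "(h1 + h2) * y \<le> h2 * x + h1 * z"
    using assms(6-8) by (simp add: field_simps)
  then have "y \<le> w"
    unfolding w_def combination using assms(6,7) by (simp add: pos_le_divide_eq mult.commute)
  then have "\<psi> y \<le> \<psi> w" using mono_onD[OF assms(2) assms(4) \<open>w \<in> I\<close>] by simp
  also have "\<psi> w \<le> (1 - \<mu>) * \<psi> x + \<mu> * \<psi> z"
    using convex_onD[OF assms(1) \<mu> assms(3,5)] by (simp add: w_def)
  finally have "(h1 + h2) * \<psi> y \<le> h2 * \<psi> x + h1 * \<psi> z"
    unfolding combination using assms(6,7) by (simp add: pos_le_divide_eq mult.commute)
  then show ?thesis using assms(6,7) by (simp add: field_simps)
qed

lemma T_set_convex_mono_comp:
  fixes \<psi> :: "real \<Rightarrow> real"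
  assumes "convex_on I \<psi>" "mono_on I \<psi>" "\<forall>i\<in>{1..n}. a i \<in> I" "t \<in> T_set n a"
  shows "t \<in> T_set n (\<lambda>i. \<psi> (a i))"
proof -
  have incr: "incr_seq n t" and a_slopes:
    "\<And>k l. 1 \<le> k \<Longrightarrow> k \<le> l \<Longrightarrow> l < n \<Longrightarrow> rel_slope t a k \<le> rel_slope t a l"
    using assms(4) by (auto simp: T_set_iff)
  have consecutive: "rel_slope t (\<lambda>i. \<psi> (a i)) k \<le> rel_slope t (\<lambda>i. \<psi> (a i)) (Suc k)"
    if "1 \<le> k" "Suc k < n" for k
    using convex_mono_relative_slope_le[OF assms(1,2), of "a k" "a (Suc k)" "a (Suc (Suc k))"]
      a_slopes[of k "Suc k"] incr_seq_less[OF incr, of k "Suc k"]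
      incr_seq_less[OF incr, of "Suc k" "Suc (Suc k)"] assms(3) that
    by (simp add: rel_slope_def)
  have "rel_slope t (\<lambda>i. \<psi> (a i)) k \<le> rel_slope t (\<lambda>i. \<psi> (a i)) l"
    if "1 \<le> k" "k \<le> l" "l < n" for k l
    using that(2,3)
  proof (induction l rule: dec_induct)
    case (step l)
    then show ?case using consecutive[of l] that(1) by simp
  qed simp
  then show ?thesis using incr by (simp add: T_set_iff)
qed

lemma sum_rel_slopes_le:
  assumes "incr_seq n t" "1 \<le> j" "j \<le> i" "i \<le> n"
    and "\<forall>k\<in>{j..<i}. rel_slope t s k \<le> c"
  shows "s i - s j \<le> c * (t i - t j)"
  using assms(3,4,5)
proof (induction i rule: dec_induct)
  case (step i)
  have "t i < t (Suc i)" using incr_seq_less[OF assms(1)] assms(2) step by simp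
  moreover have "rel_slope t s i \<le> c" using step by simp
  ultimately have "s (Suc i) - s i \<le> c * (t (Suc i) - t i)"
    by (simp add: rel_slope_def pos_divide_le_eq)
  then show ?case using step by (simp add: algebra_simps)
qed simp

lemma sum_rel_slopes_ge:
  assumes "incr_seq n t" "1 \<le> j" "j \<le> i" "i \<le> n"
    and "\<forall>k\<in>{j..<i}. c \<le> rel_slope t s k"
  shows "c * (t i - t j) \<le> s i - s j"
proof -
  have "rel_slope t (\<lambda>k. - s k) k = - rel_slope t s k" for k
    unfolding rel_slope_def minus_divide_left by simp
  then have "\<forall>k\<in>{j..<i}. rel_slope t (\<lambda>k. - s k) k \<le> - c"
    using assms(5) by simp
  from sum_rel_slopes_le[OF assms(1-4) this] show ?thesis by simp
qed

lemma T_set_support_line: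
  assumes "t \<in> T_set n s" "1 \<le> m" "m < n" "1 \<le> i" "i \<le> n"
  shows "s m + rel_slope t s m * (t i - t m) \<le> s i"
proof -
  have incr: "incr_seq n t" using assms(1) by (simp add: T_set_iff)
  have slopes: "\<And>k l. 1 \<le> k \<Longrightarrow> k \<le> l \<Longrightarrow> l < n \<Longrightarrow> rel_slope t s k \<le> rel_slope t s l"
    using assms(1) by (simp add: T_set_iff)
  show ?thesis
  proof (cases "m \<le> i")
    case True
    have "rel_slope t s m * (t i - t m) \<le> s i - s m"
      by (rule sum_rel_slopes_ge[OF incr assms(2) True assms(5)]) (use slopes assms in auto)
    then show ?thesis by simp
  next
    case False
    have "s m - s i \<le> rel_slope t s m * (t m - t i)"
      by (rule sum_rel_slopes_le[OF incr assms(4)]) (use False slopes assms in auto)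
    then show ?thesis by (simp add: algebra_simps)
  qed
qed

lemma T_set_below_chord:
  assumes "t \<in> T_set n s" "2 \<le> n" "1 \<le> i" "i \<le> n"
  shows "s i \<le> s 1 + (s n - s 1) / (t n - t 1) * (t i - t 1)"
proof -
  have incr: "incr_seq n t" using assms(1) by (simp add: T_set_iff)
  have slopes: "\<And>k l. 1 \<le> k \<Longrightarrow> k \<le> l \<Longrightarrow> l < n \<Longrightarrow> rel_slope t s k \<le> rel_slope t s l"
    using assms(1) by (simp add: T_set_iff)
  have "t 1 < t n" using incr_seq_less[OF incr, of 1 n] assms(2) by simp
  show ?thesis
  proof (cases "i = 1 \<or> i = n")
    case True
    then show ?thesis using \<open>t 1 < t n\<close> by auto
  next
    case False
    \<comment> \<open>the slope just before \<open>i\<close> separates the slopes on \<open>[1, i]\<close> from those on \<open>[i, n]\<close>\<close>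
    define \<tau> where "\<tau> = rel_slope t s (i - 1)"
    have left: "s i - s 1 \<le> \<tau> * (t i - t 1)"
      by (rule sum_rel_slopes_le[OF incr]) (use False slopes assms in \<open>auto simp: \<tau>_def\<close>)
    have right: "\<tau> * (t n - t i) \<le> s n - s i"
      by (rule sum_rel_slopes_ge[OF incr]) (use False slopes assms in \<open>auto simp: \<tau>_def\<close>)
    have u: "0 \<le> t i - t 1" and v: "0 \<le> t n - t i"
      using incr_seq_le[OF incr] assms(3,4) by auto
    have "(s i - s 1) * (t n - t i) \<le> \<tau> * (t i - t 1) * (t n - t i)"
      using mult_right_mono[OF left v] .
    also have "\<dots> \<le> (s n - s i) * (t i - t 1)"
      using mult_right_mono[OF right u] by (simp add: algebra_simps)
    finally have "(s i - s 1) * (t n - t 1) \<le> (s n - s 1) * (t i - t 1)"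
      by (simp add: algebra_simps)
    then show ?thesis using \<open>t 1 < t n\<close> by (simp add: field_simps)
  qed
qed

lemma M_mean_affine:
  assumes "P_sum n p \<noteq> 0"
  shows "(1 / P_sum n p) * (\<Sum>i=1..n. p i * (\<alpha> + \<beta> * (t i - c)))
           = \<alpha> + \<beta> * (M_mean n p t - c)"
proof -
  have "(\<Sum>i=1..n. p i * (\<alpha> + \<beta> * (t i - c)))
          = (\<alpha> - \<beta> * c) * P_sum n p + \<beta> * (\<Sum>i=1..n. p i * t i)"
    by (simp add: P_sum_def algebra_simps sum.distrib sum_distrib_left sum_distrib_right
        sum_subtractf)
  then show ?thesis using assms by (simp add: M_mean_def field_simps)
qed

lemma M_mean_ge_affine:
  assumes "\<forall>i\<in>{1..n}. p i \<ge> 0" "P_sum n p > 0"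
    and "\<forall>i\<in>{1..n}. \<alpha> + \<beta> * (t i - c) \<le> s i"
  shows "\<alpha> + \<beta> * (M_mean n p t - c) \<le> (1 / P_sum n p) * (\<Sum>i=1..n. p i * s i)"
proof -
  have "(\<Sum>i=1..n. p i * (\<alpha> + \<beta> * (t i - c))) \<le> (\<Sum>i=1..n. p i * s i)"
    by (rule sum_mono) (use assms(1,3) in \<open>auto intro: mult_left_mono\<close>)
  then have "(\<Sum>i=1..n. p i * (\<alpha> + \<beta> * (t i - c))) / P_sum n p
      \<le> (\<Sum>i=1..n. p i * s i) / P_sum n p"
    using assms(2) by (intro divide_right_mono) auto
  then show ?thesis
    using M_mean_affine[of n p \<alpha> \<beta> t c] assms(2) by simp
qed

lemma M_mean_le_affine:
  assumes "\<forall>i\<in>{1..n}. p i \<ge> 0" "P_sum n p > 0"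
    and "\<forall>i\<in>{1..n}. s i \<le> \<alpha> + \<beta> * (t i - c)"
  shows "(1 / P_sum n p) * (\<Sum>i=1..n. p i * s i) \<le> \<alpha> + \<beta> * (M_mean n p t - c)"
proof -
  have "(\<Sum>i=1..n. p i * s i) \<le> (\<Sum>i=1..n. p i * (\<alpha> + \<beta> * (t i - c)))"
    by (rule sum_mono) (use assms(1,3) in \<open>auto intro: mult_left_mono\<close>)
  then have "(\<Sum>i=1..n. p i * s i) / P_sum n p
      \<le> (\<Sum>i=1..n. p i * (\<alpha> + \<beta> * (t i - c))) / P_sum n p"
    using assms(2) by (intro divide_right_mono) auto
  then show ?thesis
    using M_mean_affine[of n p \<alpha> \<beta> t c] assms(2) by simp
qed

lemma M_mean_ge_first:
  assumes "incr_seq n t" "\<forall>i\<in>{1..n}. p i \<ge> 0" "P_sum n p > 0"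
  shows "t 1 \<le> M_mean n p t"
proof -
  have "t 1 + 0 * (M_mean n p t - 0) \<le> (1 / P_sum n p) * (\<Sum>i=1..n. p i * t i)"
    using incr_seq_le[OF assms(1), of 1] assms(2,3) by (intro M_mean_ge_affine) auto
  then show ?thesis by (simp add: M_mean_def)
qed

lemma T_set_mean_ge_secant:
  assumes "t \<in> T_set n s" "\<forall>i\<in>{1..n}. p i \<ge> 0" "P_sum n p > 0" "1 \<le> m" "m < n"
  defines "gam \<equiv> (M_mean n p t - t m) / (t (Suc m) - t m)"
  shows "gam * s (Suc m) + (1 - gam) * s m \<le> (1 / P_sum n p) * (\<Sum>i=1..n. p i * s i)"
proof -
  have "t m < t (Suc m)"
    using assms(1,4,5) by (intro incr_seq_less) (auto simp: T_set_iff)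
  then have "gam * s (Suc m) + (1 - gam) * s m = s m + rel_slope t s m * (M_mean n p t - t m)"
    by (simp add: gam_def rel_slope_def divide_simps) (simp add: algebra_simps)
  also have "\<dots> \<le> (1 / P_sum n p) * (\<Sum>i=1..n. p i * s i)"
    using T_set_support_line[OF assms(1,4,5)] by (intro M_mean_ge_affine assms(2,3)) auto
  finally show ?thesis .
qed

lemma T_set_mean_le_chord:
  assumes "t \<in> T_set n s" "2 \<le> n" "\<forall>i\<in>{1..n}. p i \<ge> 0" "P_sum n p > 0"
  defines "lam \<equiv> (t n - M_mean n p t) / (t n - t 1)"
  shows "(1 / P_sum n p) * (\<Sum>i=1..n. p i * s i) \<le> lam * s 1 + (1 - lam) * s n"
proof -
  have "t 1 < t n"
    using assms(1,2) by (intro incr_seq_less) (auto simp: T_set_iff)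
  have "(1 / P_sum n p) * (\<Sum>i=1..n. p i * s i)
          \<le> s 1 + (s n - s 1) / (t n - t 1) * (M_mean n p t - t 1)"
    using T_set_below_chord[OF assms(1,2)] by (intro M_mean_le_affine assms(3,4)) auto
  also have "\<dots> = lam * s 1 + (1 - lam) * s n"
    using \<open>t 1 < t n\<close> by (simp add: lam_def divide_simps) (simp add: algebra_simps)
  finally show ?thesis .
qed

lemma floor_idx_bounds:
  assumes "1 \<le> n" "t 1 \<le> q" "q < t n"
  shows "1 \<le> floor_idx n t q" "floor_idx n t q < n"
proof -
  have "floor_idx n t q \<in> {1..n} \<and> t (floor_idx n t q) \<le> q"
    unfolding floor_idx_def by (rule GreatestI_ex_nat[where b = n]) (use assms(1,2) in auto)
  then show "1 \<le> floor_idx n t q" "floor_idx n t q < n"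
    using assms(3) by (auto simp: order.order_iff_strict)
qed

theorem theorem4p3:
  fixes I :: "real set" and \<psi> :: "real \<Rightarrow> real" and n :: nat
    and a t p :: "nat \<Rightarrow> real"
  assumes "is_interval I"
    and "mono_on I \<psi>" and "convex_on I \<psi>"
    and "n \<ge> 2"
    and "\<forall>i\<in>{1..n}. a i \<in> I"
    and "relative_convex n a"
    and "t \<in> T_set n a"
    and "\<forall>i\<in>{1..n}. p i \<ge> 0"
    and "P_sum n p > 0"
    and "M_mean n p t < t n"
  shows "let M = M_mean n p t; m = floor_idx n t M;
             gam = (M - t m) / (t (Suc m) - t m);
             lam = (t n - M) / (t n - t 1)
         in gam * \<psi> (a (Suc m)) + (1 - gam) * \<psi> (a m)
              \<le> (1 / P_sum n p) * (\<Sum>i=1..n. p i * \<psi> (a i))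
          \<and> (1 / P_sum n p) * (\<Sum>i=1..n. p i * \<psi> (a i))
              \<le> lam * \<psi> (a 1) + (1 - lam) * \<psi> (a n)"
proof -
  define s where "s = (\<lambda>i. \<psi> (a i))"
  have ts: "t \<in> T_set n s"
    using T_set_convex_mono_comp[OF assms(3,2,5,7)] by (simp add: s_def)
  then have "incr_seq n t" by (simp add: T_set_iff)
  have "1 \<le> n" using assms(4) by simp
  note m = floor_idx_bounds[OF this M_mean_ge_first[OF \<open>incr_seq n t\<close> assms(8,9)] assms(10)]
  \<comment> \<open>the secant bound holds for every \<open>1 \<le> m < n\<close>; \<open>is_interval I\<close> and \<open>relative_convex n a\<close> are
    implied by \<open>convex_on I \<psi>\<close> and \<open>t \<in> T_set n a\<close>\<close>
  show ?thesis
    using T_set_mean_ge_secant[OF ts assms(8,9) m(1,2)] T_set_mean_le_chord[OF ts assms(4,8,9)]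
    by (simp add: Let_def s_def)
qed

end
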